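(* (Setting as in the context.) Let $\tau>0$ and let $\{(u^k,y^k,v^k,z^k,x^k)\}$ be generated by Algorithm SCB-SPADMM. Then for every $k\ge0$, $(u^{k+1},y^{k+1},v^{k+1},z^{k+1},x^{k+1})$ can be generated exactly by $$(u^{k+1},y^{k+1})=\operatorname{argmin}_{u,y}\ \mathcal L_\sigma(u,y,v^k,z^k;x^k)+\tfrac\sigma2\|(u,y_{\le p-1})-(u^k,y^k_{\le p-1})\|^2_{\widehat{\mathcal T}_{f_p}}+\tfrac\sigma2\|y_p-y_p^k\|^2_{\mathcal T_{\theta_p}},$$ $$(v^{k+1},z^{k+1})=\operatorname{argmin}_{v,z}\ \mathcal L_\sigma(u^{k+1},y^{k+1},v,z;x^k)+\tfrac\sigma2\|(v,z_{\le q-1})-(v^k,z^k_{\le q-1})\|^2_{\widehat{\mathcal T}_{g_q}}+\tfrac\sigma2\|z_q-z_q^k\|^2_{\mathcal T_{\varphi_q}},$$ $$x^{k+1}=x^k+\tau\sigma(\mathcal F^*u^{k+1}+\mathcal A^*y^{k+1}+\mathcal G^*v^{k+1}+\mathcal B^*z^{k+1}-c).$$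
   Context: Let $p,q\ge1$ be integers, $\mathcal U,\mathcal V,\mathcal X,\mathcal Y_i,\mathcal Z_j$ real finite-dimensional Euclidean spaces, $\mathcal Y=\prod_i\mathcal Y_i$, $\mathcal Z=\prod_j\mathcal Z_j$; $f,g$ closed proper convex on $\mathcal U,\mathcal V$; $\mathcal F:\mathcal X\to\mathcal U$, $\mathcal G:\mathcal X\to\mathcal V$, $\mathcal A_i:\mathcal X\to\mathcal Y_i$, $\mathcal B_j:\mathcal X\to\mathcal Z_j$ linear; $c\in\mathcal X$; $\theta_i(y_i)=\frac12\langle y_i,\mathcal P_iy_i\rangle-\langle b_i,y_i\rangle$, $\varphi_j(z_j)=\frac12\langle z_j,\mathcal Q_jz_j\rangle-\langle d_j,z_j\rangle$ with $\mathcal P_i,\mathcal Q_j$ self-adjoint positive semidefinite. $\mathcal A^*y=\sum_i\mathcal A_i^*y_i$, $\mathcal B^*z=\sum_j\mathcal B_j^*z_j$, $\Gamma(u,y,v,z)=\mathcal F^*u+\mathcal A^*y+\mathcal G^*v+\mathcal B^*z-c$, $\sigma>0$, $\mathcal L_\sigma(u,y,v,z;x)=f(u)+\sum\theta_i(y_i)+g(v)+\sum\varphi_j(z_j)+\langle x,\Gamma\rangle+\frac\sigma2\|\Gamma\|^2$. $\mathcal E_{\theta_i}\succ0$ self-adjoint with $\mathcal E_{\theta_i}\succeq\sigma^{-1}\mathcal P_i+\mathcal A_i\mathcal A_i^*$, $\mathcal T_{\theta_i}:=\mathcal E_{\theta_i}-\sigma^{-1}\mathcal P_i-\mathcal A_i\mathcal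 A_i^*$; $\mathcal E_{\varphi_j}\succ0$ self-adjoint with $\mathcal E_{\varphi_j}\succeq\sigma^{-1}\mathcal Q_j+\mathcal B_j\mathcal B_j^*$, $\mathcal T_{\varphi_j}:=\mathcal E_{\varphi_j}-\sigma^{-1}\mathcal Q_j-\mathcal B_j\mathcal B_j^*$. $\mathcal T_f,\mathcal T_g$ self-adjoint positive semidefinite on $\mathcal U,\mathcal V$. Notation $y_{\le i},y_{\ge i},z_{\le j},z_{\ge j}$ for sub-tuples (empty if out of range), $\|w\|^2_{\mathcal T}=\langle w,\mathcal Tw\rangle$. $\mathcal F_1:=\mathcal F$, $\mathcal F_{i+1}x:=(\mathcal Fx,\mathcal A_1x,\dots,\mathcal A_ix)$; $\widehat{\mathcal T}_{f_1}:=\mathcal T_f+\mathcal F_1\mathcal A_1^*\mathcal E_{\theta_1}^{-1}\mathcal A_1\mathcal F_1^*$, $\widehat{\mathcal T}_{f_i}:=\mathrm{diag}(\widehat{\mathcal T}_{f_{i-1}},\mathcal T_{\theta_{i-1}})+\mathcal F_i\mathcal A_i^*\mathcal E_{\theta_i}^{-1}\mathcal A_i\mathcal F_i^*$ ($i=2,\dots,p$). Analogously $\mathcal G_1:=\mathcal G$, $\mathcal G_{j+1}x:=(\mathcal Gx,\mathcal B_1x,\dots,\mathcal B_jx)$; $\widehat{\mathcal T}_{g_1}:=\mathcal T_g+\mathcal G_1\mathcal B_1^*\mathcal E_{\varphi_1}^{-1}\mathcal B_1\mathcal G_1^*$, $\widehat{\mathcal T}_{g_j}:=\mathrm{diag}(\widehat{\mathcal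 T}_{g_{j-1}},\mathcal T_{\varphi_{j-1}})+\mathcal G_j\mathcal B_j^*\mathcal E_{\varphi_j}^{-1}\mathcal B_j\mathcal G_j^*$ ($j=2,\dots,q$). Algorithm SCB-SPADMM: choose $(u^0,y^0,v^0,z^0,x^0)\in\mathrm{dom}f\times\mathcal Y\times\mathrm{dom}g\times\mathcal Z\times\mathcal X$; for $k=0,1,\dots$: (1) for $i=p,\dots,1$, $\bar y_i^k=\operatorname{argmin}_{y_i}\mathcal L_\sigma(u^k,(y^k_{\le i-1},y_i,\bar y^k_{\ge i+1}),v^k,z^k;x^k)+\frac\sigma2\|y_i-y_i^k\|^2_{\mathcal T_{\theta_i}}$, then $u^{k+1}=\operatorname{argmin}_u\mathcal L_\sigma(u,\bar y^k,v^k,z^k;x^k)+\frac\sigma2\|u-u^k\|^2_{\mathcal T_f}$; (2) for $i=1,\dots,p$, $y_i^{k+1}=\operatorname{argmin}_{y_i}\mathcal L_\sigma(u^{k+1},(y^{k+1}_{\le i-1},y_i,\bar y^k_{\ge i+1}),v^k,z^k;x^k)+\frac\sigma2\|y_i-y_i^k\|^2_{\mathcal T_{\theta_i}}$; (3) for $j=q,\dots,1$, $\bar z_j^k=\operatorname{argmin}_{z_j}\mathcal L_\sigma(u^{k+1},y^{k+1},v^k,(z^k_{\le j-1},z_j,\bar z^k_{\ge j+1});x^k)+\frac\sigma2\|z_j-z_j^k\|^2_{\mathcal T_{\varphi_j}}$, then $v^{k+1}=\operatorname{argmin}_v\mathcal L_\sigma(u^{k+1},y^{k+1},v,\bar z^k;x^k)+\frac\sigma2\|v-v^k\|^2_{\mathcal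 T_g}$; (4) for $j=1,\dots,q$, $z_j^{k+1}=\operatorname{argmin}_{z_j}\mathcal L_\sigma(u^{k+1},y^{k+1},v^{k+1},(z^{k+1}_{\le j-1},z_j,\bar z^k_{\ge j+1});x^k)+\frac\sigma2\|z_j-z_j^k\|^2_{\mathcal T_{\varphi_j}}$; (5) $x^{k+1}=x^k+\tau\sigma(\mathcal F^*u^{k+1}+\mathcal A^*y^{k+1}+\mathcal G^*v^{k+1}+\mathcal B^*z^{k+1}-c)$. *)

theory Defs
  imports "HOL-Analysis.Analysis"
begin

text \<open>Closed proper convex function, represented by its finite values on its
  effective domain D (the function is +infinity outside D): D nonempty convex,
  f convex on D, epigraph closed.\<close>
definition closed_proper_convex :: "('a::real_normed_vector \<Rightarrow> real) \<Rightarrow> 'a set \<Rightarrow> bool" where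
  "closed_proper_convex f D \<longleftrightarrow> D \<noteq> {} \<and> convex D \<and> convex_on D f
      \<and> closed {(w, t). w \<in> D \<and> f w \<le> t}"

definition sa_psd_on :: "'a::real_inner set \<Rightarrow> ('a \<Rightarrow> 'a) \<Rightarrow> bool" where
  "sa_psd_on S T \<longleftrightarrow> linear T \<and> (\<forall>a\<in>S. T a \<in> S)
      \<and> (\<forall>a\<in>S. \<forall>b\<in>S. T a \<bullet> b = a \<bullet> T b) \<and> (\<forall>a\<in>S. 0 \<le> a \<bullet> T a)"

definition qn :: "('a::real_inner \<Rightarrow> 'a) \<Rightarrow> 'a \<Rightarrow> real" where
  "qn T w = w \<bullet> T w"

definition quadlin :: "('a::real_inner \<Rightarrow> 'a) \<Rightarrow> 'a \<Rightarrow> 'a \<Rightarrow> real" where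
  "quadlin P b w = 1/2 * (w \<bullet> P w) - b \<bullet> w"

definition Gam :: "('x::euclidean_space \<Rightarrow> 'u::euclidean_space) \<Rightarrow> ('x \<Rightarrow> 'v::euclidean_space)
   \<Rightarrow> (nat \<Rightarrow> 'x \<Rightarrow> 'y::euclidean_space) \<Rightarrow> (nat \<Rightarrow> 'x \<Rightarrow> 'z::euclidean_space) \<Rightarrow> 'x
   \<Rightarrow> nat \<Rightarrow> nat \<Rightarrow> 'u \<Rightarrow> (nat \<Rightarrow> 'y) \<Rightarrow> 'v \<Rightarrow> (nat \<Rightarrow> 'z) \<Rightarrow> 'x" where
  "Gam F G A B c p q u y v z =
     adjoint F u + (\<Sum>i\<in>{1..p}. adjoint (A i) (y i)) + adjoint G v
       + (\<Sum>j\<in>{1..q}. adjoint (B j) (z j)) - c"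

text \<open>Augmented Lagrangian L_sigma(u,y,v,z;x) (for u in dom f, v in dom g).\<close>
definition Lagr :: "real \<Rightarrow> ('u::euclidean_space \<Rightarrow> real) \<Rightarrow> ('v::euclidean_space \<Rightarrow> real)
   \<Rightarrow> ('x::euclidean_space \<Rightarrow> 'u) \<Rightarrow> ('x \<Rightarrow> 'v)
   \<Rightarrow> (nat \<Rightarrow> 'x \<Rightarrow> 'y::euclidean_space) \<Rightarrow> (nat \<Rightarrow> 'x \<Rightarrow> 'z::euclidean_space) \<Rightarrow> 'x
   \<Rightarrow> (nat \<Rightarrow> 'y \<Rightarrow> 'y) \<Rightarrow> (nat \<Rightarrow> 'y) \<Rightarrow> (nat \<Rightarrow> 'z \<Rightarrow> 'z) \<Rightarrow> (nat \<Rightarrow> 'z)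
   \<Rightarrow> nat \<Rightarrow> nat \<Rightarrow> 'u \<Rightarrow> (nat \<Rightarrow> 'y) \<Rightarrow> 'v \<Rightarrow> (nat \<Rightarrow> 'z) \<Rightarrow> 'x \<Rightarrow> real" where
  "Lagr \<sigma> f g F G A B c P b Q d p q u y v z x =
     f u + (\<Sum>i\<in>{1..p}. quadlin (P i) (b i) (y i)) + g v + (\<Sum>j\<in>{1..q}. quadlin (Q j) (d j) (z j))
       + x \<bullet> Gam F G A B c p q u y v z + \<sigma> / 2 * (norm (Gam F G A B c p q u y v z))\<^sup>2"

definition blk :: "(nat \<Rightarrow> 'a) \<Rightarrow> nat \<Rightarrow> 'a \<Rightarrow> (nat \<Rightarrow> 'a) \<Rightarrow> nat \<Rightarrow> 'a" where
  "blk y i w ybar = (\<lambda>l. if l < i then y l else if l = i then w else ybar l)"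

definition Tth :: "real \<Rightarrow> (nat \<Rightarrow> 'y::euclidean_space \<Rightarrow> 'y) \<Rightarrow> (nat \<Rightarrow> 'y \<Rightarrow> 'y)
   \<Rightarrow> (nat \<Rightarrow> 'x::euclidean_space \<Rightarrow> 'y) \<Rightarrow> nat \<Rightarrow> 'y \<Rightarrow> 'y" where
  "Tth \<sigma> E P A i w = E i w - (1/\<sigma>) *\<^sub>R P i w - A i (adjoint (A i) w)"

text \<open>Elements of U x Y_1 x ... x Y_{i-1} are pairs (u, w) with w j used for 1 <= j < i.
  F_i x = (F x, A_1 x, ..., A_{i-1} x) and its adjoint.\<close>
definition Fi :: "('x::euclidean_space \<Rightarrow> 'u::euclidean_space) \<Rightarrow> (nat \<Rightarrow> 'x \<Rightarrow> 'y::euclidean_space)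
   \<Rightarrow> nat \<Rightarrow> 'x \<Rightarrow> 'u \<times> (nat \<Rightarrow> 'y)" where
  "Fi F A i x = (F x, \<lambda>j. if 1 \<le> j \<and> j < i then A j x else 0)"

definition Fi_adj :: "('x::euclidean_space \<Rightarrow> 'u::euclidean_space) \<Rightarrow> (nat \<Rightarrow> 'x \<Rightarrow> 'y::euclidean_space)
   \<Rightarrow> nat \<Rightarrow> 'u \<times> (nat \<Rightarrow> 'y) \<Rightarrow> 'x" where
  "Fi_adj F A i uw = adjoint F (fst uw) + (\<Sum>j\<in>{1..<i}. adjoint (A j) (snd uw j))"

definition padd :: "'u::real_vector \<times> (nat \<Rightarrow> 'y::real_vector) \<Rightarrow> 'u \<times> (nat \<Rightarrow> 'y) \<Rightarrow> 'u \<times> (nat \<Rightarrow> 'y)" where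
  "padd a b = (fst a + fst b, \<lambda>j. snd a j + snd b j)"

text \<open>The term F_i A_i^* E_i^{-1} A_i F_i^* applied to uw; E_i^{-1} is the inverse of E_i on Y_i.\<close>
definition sgscorr :: "('x::euclidean_space \<Rightarrow> 'u::euclidean_space) \<Rightarrow> (nat \<Rightarrow> 'x \<Rightarrow> 'y::euclidean_space)
   \<Rightarrow> (nat \<Rightarrow> 'y \<Rightarrow> 'y) \<Rightarrow> (nat \<Rightarrow> 'y set) \<Rightarrow> nat \<Rightarrow> 'u \<times> (nat \<Rightarrow> 'y) \<Rightarrow> 'u \<times> (nat \<Rightarrow> 'y)" where
  "sgscorr F A E Y i uw = Fi F A i (adjoint (A i) (inv_into (Y i) (E i) (A i (Fi_adj F A i uw))))"

text \<open>hat T_{f_i} on U x Y_1 x ... x Y_{i-1}: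
  hatT 1 = T_f + F_1 A_1^* E_1^{-1} A_1 F_1^*,
  hatT i = diag(hatT (i-1), T_theta_{i-1}) + F_i A_i^* E_i^{-1} A_i F_i^*.\<close>
fun hatT :: "real \<Rightarrow> ('u::euclidean_space \<Rightarrow> 'u) \<Rightarrow> ('x::euclidean_space \<Rightarrow> 'u)
   \<Rightarrow> (nat \<Rightarrow> 'x \<Rightarrow> 'y::euclidean_space) \<Rightarrow> (nat \<Rightarrow> 'y \<Rightarrow> 'y) \<Rightarrow> (nat \<Rightarrow> 'y \<Rightarrow> 'y)
   \<Rightarrow> (nat \<Rightarrow> 'y set) \<Rightarrow> nat \<Rightarrow> 'u \<times> (nat \<Rightarrow> 'y) \<Rightarrow> 'u \<times> (nat \<Rightarrow> 'y)" where
  "hatT \<sigma> Tf F A P E Y 0 uw = uw"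
| "hatT \<sigma> Tf F A P E Y (Suc 0) uw = padd (Tf (fst uw), \<lambda>j. 0) (sgscorr F A E Y 1 uw)"
| "hatT \<sigma> Tf F A P E Y (Suc (Suc n)) uw =
     padd (let r = hatT \<sigma> Tf F A P E Y (Suc n) (fst uw, \<lambda>j. if j < Suc n then snd uw j else 0)
           in (fst r, (snd r)(Suc n := Tth \<sigma> E P A (Suc n) (snd uw (Suc n)))))
          (sgscorr F A E Y (Suc (Suc n)) uw)"

definition hatqf :: "real \<Rightarrow> ('u::euclidean_space \<Rightarrow> 'u) \<Rightarrow> ('x::euclidean_space \<Rightarrow> 'u)
   \<Rightarrow> (nat \<Rightarrow> 'x \<Rightarrow> 'y::euclidean_space) \<Rightarrow> (nat \<Rightarrow> 'y \<Rightarrow> 'y) \<Rightarrow> (nat \<Rightarrow> 'y \<Rightarrow> 'y)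
   \<Rightarrow> (nat \<Rightarrow> 'y set) \<Rightarrow> nat \<Rightarrow> 'u \<times> (nat \<Rightarrow> 'y) \<Rightarrow> real" where
  "hatqf \<sigma> Tf F A P E Y i uw =
     (let r = hatT \<sigma> Tf F A P E Y i uw in
        fst uw \<bullet> fst r + (\<Sum>j\<in>{1..<i}. snd uw j \<bullet> snd r j))"

end

theory Submission
  imports Defs
begin

text \<open>Subtracting the stationarity conditions of the backward and the forward sweep at block \<open>l\<close>
  gives \<open>E\<^sub>l (yb\<^sub>l - y\<^sub>l\<^sup>k\<^sup>+\<^sup>1) = A\<^sub>l F\<^sub>l\<^sup>* ((u,y)\<^sup>k\<^sup>+\<^sup>1 - (u,y)\<^sup>k)\<close>, so the gap between the two
  sweeps is the gradient of the \<open>E\<^sub>l\<^sup>-\<^sup>1\<close>-terms of the quadratic form of \<open>hatT\<close>. Adding the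
  optimality condition of the \<open>u\<close>-step to the forward-sweep conditions then shows that the
  first-order terms of the joint objective at the new iterate are nonnegative in every
  feasible direction; the remaining terms are convex quadratics, which lie above their tangents.
  The \<open>(v, z)\<close>-part is the same statement with the roles of the two blocks exchanged.\<close>

lemma qn_add_scaleR:
  assumes "sa_psd_on S T" "a \<in> S" "h \<in> S"
  shows "qn T (a + t *\<^sub>R h) = qn T a + t * (2 * (T a \<bullet> h)) + t\<^sup>2 * qn T h"
proof -
  have lin: "linear T" and sa: "T a \<bullet> h = a \<bullet> T h"
    using assms unfolding sa_psd_on_def by auto
  have "T (a + t *\<^sub>R h) = T a + t *\<^sub>R T h"
    using lin by (simp add: linear_add linear_scale)
  then show ?thesis
    using sa unfolding qn_def
    by (simp add: inner_add_left inner_add_right power2_eq_square algebra_simps inner_commute[of h "T a"])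
qed

lemma qn_nonneg: "sa_psd_on S T \<Longrightarrow> a \<in> S \<Longrightarrow> 0 \<le> qn T a"
  unfolding sa_psd_on_def qn_def by auto

lemma qn_add_ge:
  assumes "sa_psd_on S T" "a \<in> S" "h \<in> S"
  shows "qn T a + 2 * (T a \<bullet> h) \<le> qn T (a + h)"
  using qn_add_scaleR[OF assms, of 1] qn_nonneg[OF assms(1,3)] by simp

lemma quadlin_add_scaleR:
  assumes "sa_psd_on S P" "a \<in> S" "h \<in> S"
  shows "quadlin P c (a + t *\<^sub>R h) = quadlin P c a + t * ((P a - c) \<bullet> h) + t\<^sup>2 * (1/2 * (h \<bullet> P h))"
proof -
  have lin: "linear P" and sa: "P a \<bullet> h = a \<bullet> P h"
    using assms unfolding sa_psd_on_def by auto
  have "P (a + t *\<^sub>R h) = P a + t *\<^sub>R P h"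
    using lin by (simp add: linear_add linear_scale)
  then show ?thesis
    using sa unfolding quadlin_def
    by (simp add: inner_add_left inner_add_right inner_diff_left power2_eq_square algebra_simps
        inner_commute[of h "P a"])
qed

lemma nonneg_slope_of_nonneg_quadratic:
  fixes D C :: real
  assumes "\<And>t. 0 < t \<Longrightarrow> t \<le> 1 \<Longrightarrow> 0 \<le> t * D + t\<^sup>2 * C"
  shows "0 \<le> D"
proof (rule ccontr)
  assume "\<not> 0 \<le> D"
  then have D: "D < 0" by simp
  define M where "M = 2 * (\<bar>C\<bar> + 1)"
  have M: "0 < M" by (simp add: M_def add_nonneg_pos)
  define t where "t = min 1 (- D / M)"
  have t0: "0 < t" and t1: "t \<le> 1" using D M by (simp_all add: t_def divide_neg_pos)
  have "t * M \<le> (- D / M) * M"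
    by (rule mult_right_mono) (use M in \<open>auto simp: t_def\<close>)
  then have "t * M \<le> - D" using M by simp
  then have tC: "t * \<bar>C\<bar> \<le> - D / 2" using t0 unfolding M_def by (simp add: algebra_simps)
  have "t * D + t\<^sup>2 * C \<le> t * D + t * (t * \<bar>C\<bar>)"
    using t0 by (simp add: power2_eq_square mult_left_mono abs_ge_self)
  also have "\<dots> \<le> t * D + t * (- D / 2)"
    using mult_left_mono[OF tC, of t] t0 by (simp add: algebra_simps)
  also have "\<dots> < 0" using t0 D by (simp add: algebra_simps mult_neg_pos)
  finally show False using assms[OF t0 t1] by simp
qed

lemma sum_triangle_swap:
  fixes g :: "nat \<Rightarrow> nat \<Rightarrow> 'a::comm_monoid_add"
  shows "(\<Sum>l\<in>{1..p}. \<Sum>j\<in>{1..<l}. g j l) = (\<Sum>j\<in>{1..<p}. \<Sum>l\<in>{j<..p}. g j l)"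
proof -
  have "(\<Sum>l\<in>{1..p}. \<Sum>j\<in>{1..<l}. g j l) = (\<Sum>l\<in>{1..p}. \<Sum>j\<in>{j. j \<in> {1..p} \<and> j < l}. g j l)"
    by (rule sum.cong) (auto intro!: sum.cong)
  also have "\<dots> = (\<Sum>j\<in>{1..p}. \<Sum>l\<in>{l. l \<in> {1..p} \<and> j < l}. g j l)"
    by (rule sum.swap_restrict) auto
  also have "\<dots> = (\<Sum>j\<in>{1..p}. \<Sum>l\<in>{j<..p}. g j l)"
    by (rule sum.cong) (auto intro!: sum.cong)
  also have "\<dots> = (\<Sum>j\<in>{1..<p}. \<Sum>l\<in>{j<..p}. g j l)"
    by (rule sum.mono_neutral_right) auto
  finally show ?thesis .
qed

lemma sum_if_less_eq_sum_atLeastLessThan: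
  "l \<le> Suc p \<Longrightarrow> (\<Sum>j\<in>{1..p}. if j < l then g j else 0) = (\<Sum>j\<in>{1..<l}. g j)"
  by (subst sum.inter_filter[symmetric]) (auto intro: sum.cong)

lemma sa_psd_on_Tth:
  assumes Y: "subspace (Y i)" and P: "sa_psd_on (Y i) (P i)" and E: "sa_psd_on (Y i) (E i)"
    and A: "linear (A i)" "\<And>w. A i w \<in> Y i"
    and E_ge: "\<And>a. a \<in> Y i \<Longrightarrow> a \<bullet> ((1/\<sigma>) *\<^sub>R P i a + A i (adjoint (A i) a)) \<le> a \<bullet> E i a"
  shows "sa_psd_on (Y i) (Tth \<sigma> E P A i)"
proof -
  have lE: "linear (E i)" and lP: "linear (P i)" using E P unfolding sa_psd_on_def by auto
  have lAa: "linear (adjoint (A i))" using adjoint_linear[OF A(1)] .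
  have "linear (Tth \<sigma> E P A i)"
    unfolding linear_iff Tth_def
    by (simp add: linear_add[OF lE] linear_add[OF lP] linear_add[OF A(1)] linear_add[OF lAa]
        linear_scale[OF lE] linear_scale[OF lP] linear_scale[OF A(1)] linear_scale[OF lAa] algebra_simps)
  moreover have "\<forall>a\<in>Y i. Tth \<sigma> E P A i a \<in> Y i"
    using E P A(2) Y unfolding sa_psd_on_def Tth_def by (auto intro!: subspace_diff subspace_scale)
  moreover have "Tth \<sigma> E P A i a \<bullet> c = a \<bullet> Tth \<sigma> E P A i c" if "a \<in> Y i" "c \<in> Y i" for a c
  proof -
    have "E i a \<bullet> c = a \<bullet> E i c" "P i a \<bullet> c = a \<bullet> P i c"
      using E P that unfolding sa_psd_on_def by auto
    moreover have "A i (adjoint (A i) a) \<bullet> c = a \<bullet> A i (adjoint (A i) c)"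
      using adjoint_works[OF A(1), of "adjoint (A i) a" c] adjoint_works[OF A(1), of "adjoint (A i) c" a]
      by (simp add: inner_commute)
    ultimately show ?thesis unfolding Tth_def by (simp add: inner_diff_left inner_diff_right)
  qed
  moreover have "0 \<le> a \<bullet> Tth \<sigma> E P A i a" if "a \<in> Y i" for a
    using E_ge[OF that] unfolding Tth_def by (simp add: inner_diff_right inner_add_right)
  ultimately show ?thesis unfolding sa_psd_on_def by blast
qed

locale pd_on_subspace =
  fixes Y :: "'a::euclidean_space set" and E :: "'a \<Rightarrow> 'a"
  assumes subspace: "subspace Y" and sa_psd: "sa_psd_on Y E"
    and pos: "\<And>a. a \<in> Y \<Longrightarrow> a \<noteq> 0 \<Longrightarrow> 0 < a \<bullet> E a"
begin

lemma linear: "linear E" and maps_to: "a \<in> Y \<Longrightarrow> E a \<in> Y"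
  and self_adjoint: "a \<in> Y \<Longrightarrow> c \<in> Y \<Longrightarrow> E a \<bullet> c = a \<bullet> E c"
  and psd: "a \<in> Y \<Longrightarrow> 0 \<le> a \<bullet> E a"
  using sa_psd unfolding sa_psd_on_def by auto

lemma inj_on: "inj_on E Y"
proof (rule inj_onI)
  fix a c assume a: "a \<in> Y" and c: "c \<in> Y" and eq: "E a = E c"
  have ac: "a - c \<in> Y" using a c subspace by (simp add: subspace_diff)
  have "(a - c) \<bullet> E (a - c) = 0" using eq by (simp add: linear_diff[OF linear])
  then show "a = c" using pos[OF ac] by (cases "a - c = 0") auto
qed

lemma image_eq: "E ` Y = Y"
proof -
  have "span Y = Y" using subspace by (simp add: span_eq_iff)
  then have "dim (E ` Y) = dim Y" using dim_image_eq[of E Y] linear inj_on by metis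
  moreover have "subspace (E ` Y)" by (rule linear_subspace_image[OF linear subspace])
  ultimately show ?thesis
    using subspace_dim_equal[of "E ` Y" Y] subspace maps_to by auto
qed

lemma inv_into_in: "m \<in> Y \<Longrightarrow> inv_into Y E m \<in> Y"
  and f_inv_into: "m \<in> Y \<Longrightarrow> E (inv_into Y E m) = m"
  using image_eq by (auto intro: inv_into_into f_inv_into_f)

lemma inv_into_f: "a \<in> Y \<Longrightarrow> inv_into Y E (E a) = a"
  using inj_on by (rule inv_into_f_f)

lemma inv_into_quadratic_ge:
  assumes m1: "m1 \<in> Y" and m2: "m2 \<in> Y"
  shows "m1 \<bullet> inv_into Y E m1 + 2 * (inv_into Y E m1 \<bullet> m2) \<le> (m1 + m2) \<bullet> inv_into Y E (m1 + m2)"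
proof -
  have m12: "m1 + m2 \<in> Y" using m1 m2 subspace by (simp add: subspace_add)
  define e1 where "e1 = inv_into Y E m1"
  define e2 where "e2 = inv_into Y E (m1 + m2)"
  have e1: "e1 \<in> Y" "E e1 = m1" using m1 by (simp_all add: e1_def inv_into_in f_inv_into)
  have e2: "e2 \<in> Y" "E e2 = m1 + m2" using m12 by (simp_all add: e2_def inv_into_in f_inv_into)
  have d: "e2 - e1 \<in> Y" using e1 e2 subspace by (simp add: subspace_diff)
  have "E (e2 - e1) = m2" using e1 e2 by (simp add: linear_diff[OF linear])
  then have "0 \<le> (e2 - e1) \<bullet> m2" using psd[OF d] by simp
  moreover have "m1 \<bullet> e2 = e1 \<bullet> (m1 + m2)"
    using self_adjoint[OF e1(1) e2(1)] e1 e2 by simp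
  ultimately show ?thesis
    unfolding e1_def[symmetric] e2_def[symmetric]
    by (simp add: inner_add_left inner_add_right inner_diff_left inner_commute algebra_simps)
qed

end

lemma blk_at: "blk y i a z i = a"
  and blk_update: "blk y i w z = (blk y i a z)(i := w)"
  by (auto simp: blk_def)

text \<open>One iteration of the sGS sweep for the block \<open>(u, y\<^sub>1, \<dots>, y\<^sub>p)\<close>: backward sweep \<open>yb\<close>
  from \<open>y0\<close>, then \<open>u1\<close>, then the forward sweep \<open>y1\<close>. All other variables of the augmented
  Lagrangian are frozen; their contributions are collected in the constants \<open>S\<close> and \<open>K\<close>.\<close>
locale sgs_step =
  fixes f :: "'u::euclidean_space \<Rightarrow> real" and domf :: "'u set"
    and F :: "'x::euclidean_space \<Rightarrow> 'u" and A :: "nat \<Rightarrow> 'x \<Rightarrow> 'y::euclidean_space"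
    and Y :: "nat \<Rightarrow> 'y set" and P E :: "nat \<Rightarrow> 'y \<Rightarrow> 'y" and b :: "nat \<Rightarrow> 'y"
    and Tf :: "'u \<Rightarrow> 'u" and p :: nat and \<sigma> :: real and S :: 'x and K :: real and x :: 'x
    and Lam :: "'u \<Rightarrow> (nat \<Rightarrow> 'y) \<Rightarrow> real"
    and u0 u1 :: 'u and y0 y1 yb :: "nat \<Rightarrow> 'y"
  assumes p1: "p \<ge> 1" and sig: "\<sigma> > 0"
    and domconv: "convex domf" and fconv: "convex_on domf f"
    and linF: "linear F" and Ysub: "\<And>i. i \<in> {1..p} \<Longrightarrow> subspace (Y i)"
    and linA: "\<And>i. i \<in> {1..p} \<Longrightarrow> linear (A i)" and AY: "\<And>i w. i \<in> {1..p} \<Longrightarrow> A i w \<in> Y i"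
    and Ppsd: "\<And>i. i \<in> {1..p} \<Longrightarrow> sa_psd_on (Y i) (P i)"
    and Esa: "\<And>i. i \<in> {1..p} \<Longrightarrow> sa_psd_on (Y i) (E i)"
    and Epos: "\<And>i a. i \<in> {1..p} \<Longrightarrow> a \<in> Y i \<Longrightarrow> a \<noteq> 0 \<Longrightarrow> 0 < a \<bullet> E i a"
    and Ege: "\<And>i a. i \<in> {1..p} \<Longrightarrow> a \<in> Y i \<Longrightarrow>
                a \<bullet> ((1/\<sigma>) *\<^sub>R P i a + A i (adjoint (A i) a)) \<le> a \<bullet> E i a"
    and Tfpsd: "sa_psd_on UNIV Tf"
    and Lam_eq: "\<And>u y. Lam u y = f u + (\<Sum>i\<in>{1..p}. quadlin (P i) (b i) (y i)) + K
        + x \<bullet> (adjoint F u + (\<Sum>i\<in>{1..p}. adjoint (A i) (y i)) + S)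
        + \<sigma> / 2 * (norm (adjoint F u + (\<Sum>i\<in>{1..p}. adjoint (A i) (y i)) + S))\<^sup>2"
    and y0Y: "\<And>i. i \<in> {1..p} \<Longrightarrow> y0 i \<in> Y i"
    and step_ybar: "\<And>i. i \<in> {1..p} \<Longrightarrow> yb i \<in> Y i \<and> (\<forall>w\<in>Y i.
         Lam u0 (blk y0 i (yb i) yb) + \<sigma>/2 * qn (Tth \<sigma> E P A i) (yb i - y0 i)
         \<le> Lam u0 (blk y0 i w yb) + \<sigma>/2 * qn (Tth \<sigma> E P A i) (w - y0 i))"
    and step_u: "u1 \<in> domf \<and> (\<forall>w\<in>domf.
         Lam u1 yb + \<sigma>/2 * qn Tf (u1 - u0) \<le> Lam w yb + \<sigma>/2 * qn Tf (w - u0))"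
    and step_y: "\<And>i. i \<in> {1..p} \<Longrightarrow> y1 i \<in> Y i \<and> (\<forall>w\<in>Y i.
         Lam u1 (blk y1 i (y1 i) yb) + \<sigma>/2 * qn (Tth \<sigma> E P A i) (y1 i - y0 i)
         \<le> Lam u1 (blk y1 i w yb) + \<sigma>/2 * qn (Tth \<sigma> E P A i) (w - y0 i))"
begin

lemma linear_adjoint_F: "linear (adjoint F)"
  using adjoint_linear[OF linF] .

lemma linear_adjoint_A: "i \<in> {1..p} \<Longrightarrow> linear (adjoint (A i))"
  using adjoint_linear[OF linA] .

lemma ybar_in: "i \<in> {1..p} \<Longrightarrow> yb i \<in> Y i"
  and y1_in: "i \<in> {1..p} \<Longrightarrow> y1 i \<in> Y i"
  and u1_in: "u1 \<in> domf"
  using step_ybar step_y step_u by blast+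

lemma blk_in: "i \<in> {1..p} \<Longrightarrow> \<forall>l\<in>{1..p}. y l \<in> Y l \<Longrightarrow> a \<in> Y i \<Longrightarrow> \<forall>l\<in>{1..p}. blk y i a yb l \<in> Y l"
  using ybar_in by (auto simp: blk_def)

lemma E_pd: "i \<in> {1..p} \<Longrightarrow> pd_on_subspace (Y i) (E i)"
  by unfold_locales (use Ysub Esa Epos in auto)

lemma Tth_sa_psd: "i \<in> {1..p} \<Longrightarrow> sa_psd_on (Y i) (Tth \<sigma> E P A i)"
  by (rule sa_psd_on_Tth) (use Ysub Ppsd Esa linA AY Ege in auto)

definition res where
  "res u y = adjoint F u + (\<Sum>i\<in>{1..p}. adjoint (A i) (y i)) + S"

definition res_dir where
  "res_dir du dy = adjoint F du + (\<Sum>i\<in>{1..p}. adjoint (A i) (dy i))"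

definition shifted_mult where
  "shifted_mult u y = x + \<sigma> *\<^sub>R res u y"

definition Lam_slope where
  "Lam_slope u y du dy = (\<Sum>i\<in>{1..p}. (P i (y i) - b i) \<bullet> dy i) + shifted_mult u y \<bullet> res_dir du dy"

definition Lam_curv where
  "Lam_curv du dy = (\<Sum>i\<in>{1..p}. 1/2 * (dy i \<bullet> P i (dy i))) + \<sigma>/2 * (norm (res_dir du dy))\<^sup>2"

lemma res_add_scaleR: "res (u + t *\<^sub>R du) (\<lambda>i. y i + t *\<^sub>R dy i) = res u y + t *\<^sub>R res_dir du dy"
proof -
  have "(\<Sum>i\<in>{1..p}. adjoint (A i) (y i + t *\<^sub>R dy i))
      = (\<Sum>i\<in>{1..p}. adjoint (A i) (y i) + t *\<^sub>R adjoint (A i) (dy i))"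
    by (rule sum.cong) (auto simp: linear_add[OF linear_adjoint_A] linear_scale[OF linear_adjoint_A])
  then show ?thesis
    unfolding res_def res_dir_def
    by (simp add: linear_add[OF linear_adjoint_F] linear_scale[OF linear_adjoint_F] sum.distrib
        scaleR_sum_right algebra_simps)
qed

lemma Lam_res: "Lam u y = f u + (\<Sum>i\<in>{1..p}. quadlin (P i) (b i) (y i)) + K + x \<bullet> res u y
    + \<sigma>/2 * (norm (res u y))\<^sup>2"
  by (simp add: Lam_eq res_def)

lemma Lam_add_scaleR:
  assumes "\<forall>i\<in>{1..p}. y i \<in> Y i \<and> dy i \<in> Y i"
  shows "Lam (u + t *\<^sub>R du) (\<lambda>i. y i + t *\<^sub>R dy i)
    = Lam u y + (f (u + t *\<^sub>R du) - f u) + t * Lam_slope u y du dy + t\<^sup>2 * Lam_curv du dy"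
proof -
  have "(\<Sum>i\<in>{1..p}. quadlin (P i) (b i) (y i + t *\<^sub>R dy i))
      = (\<Sum>i\<in>{1..p}. quadlin (P i) (b i) (y i) + t * ((P i (y i) - b i) \<bullet> dy i)
          + t\<^sup>2 * (1/2 * (dy i \<bullet> P i (dy i))))"
    by (rule sum.cong) (use quadlin_add_scaleR[OF Ppsd] assms in auto)
  then have quad: "(\<Sum>i\<in>{1..p}. quadlin (P i) (b i) (y i + t *\<^sub>R dy i))
      = (\<Sum>i\<in>{1..p}. quadlin (P i) (b i) (y i)) + t * (\<Sum>i\<in>{1..p}. (P i (y i) - b i) \<bullet> dy i)
        + t\<^sup>2 * (\<Sum>i\<in>{1..p}. 1/2 * (dy i \<bullet> P i (dy i)))"
    by (simp add: sum.distrib sum_distrib_left)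
  have norm: "(norm (res u y + t *\<^sub>R res_dir du dy))\<^sup>2
      = (norm (res u y))\<^sup>2 + t * (2 * (res u y \<bullet> res_dir du dy)) + t\<^sup>2 * (norm (res_dir du dy))\<^sup>2"
    unfolding power2_norm_eq_inner
    by (simp add: inner_add_left inner_add_right algebra_simps power2_eq_square inner_commute)
  show ?thesis
    unfolding Lam_res res_add_scaleR quad Lam_slope_def Lam_curv_def shifted_mult_def norm
    by (simp add: inner_add_left inner_add_right algebra_simps power2_eq_square)
qed

lemma Lam_slope_single_block:
  assumes i: "i \<in> {1..p}"
  shows "Lam_slope u y 0 (\<lambda>l. if l = i then h else 0)
    = (P i (y i) - b i) \<bullet> h + shifted_mult u y \<bullet> adjoint (A i) h"
proof -
  have "(\<Sum>l\<in>{1..p}. (P l (y l) - b l) \<bullet> (if l = i then h else 0))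
      = (\<Sum>l\<in>{1..p}. if l = i then (P i (y i) - b i) \<bullet> h else 0)"
    by (rule sum.cong) auto
  moreover have "(\<Sum>l\<in>{1..p}. adjoint (A l) (if l = i then h else 0))
      = (\<Sum>l\<in>{1..p}. if l = i then adjoint (A i) h else 0)"
    by (rule sum.cong) (auto simp: linear_0[OF linear_adjoint_A])
  ultimately show ?thesis
    using i unfolding Lam_slope_def res_dir_def by (simp add: linear_0[OF linear_adjoint_F])
qed

text \<open>Stationarity of a single-block proximal step over the subspace \<open>Y i\<close>; two-sided
  because \<open>-h \<in> Y i\<close> whenever \<open>h \<in> Y i\<close>.\<close>
lemma block_stationarity:
  assumes i: "i \<in> {1..p}" and cfgY: "\<forall>l\<in>{1..p}. cfg l \<in> Y l" and c0: "c0 \<in> Y i"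
    and opt: "\<forall>w\<in>Y i. Lam uu cfg + \<sigma>/2 * qn (Tth \<sigma> E P A i) (cfg i - c0)
        \<le> Lam uu (cfg(i := w)) + \<sigma>/2 * qn (Tth \<sigma> E P A i) (w - c0)"
    and h: "h \<in> Y i"
  shows "(P i (cfg i) - b i) \<bullet> h + shifted_mult uu cfg \<bullet> adjoint (A i) h
      + \<sigma> * (Tth \<sigma> E P A i (cfg i - c0) \<bullet> h) = 0"
proof -
  define T where "T = Tth \<sigma> E P A i"
  have sub: "subspace (Y i)" using Ysub[OF i] .
  define G where "G h = (P i (cfg i) - b i) \<bullet> h + shifted_mult uu cfg \<bullet> adjoint (A i) h
      + \<sigma> * (T (cfg i - c0) \<bullet> h)" for h
  have G_nonneg: "0 \<le> G h" if h: "h \<in> Y i" for h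
  proof (rule nonneg_slope_of_nonneg_quadratic)
    fix t :: real
    define dy where "dy = (\<lambda>l. if l = i then h else (0::'y))"
    have "cfg(i := cfg i + t *\<^sub>R h) = (\<lambda>l. cfg l + t *\<^sub>R dy l)"
      by (auto simp: dy_def)
    moreover have "\<forall>l\<in>{1..p}. cfg l \<in> Y l \<and> dy l \<in> Y l"
      using cfgY h sub by (auto simp: dy_def subspace_0 Ysub)
    ultimately have L: "Lam uu (cfg(i := cfg i + t *\<^sub>R h))
        = Lam uu cfg + t * ((P i (cfg i) - b i) \<bullet> h + shifted_mult uu cfg \<bullet> adjoint (A i) h)
          + t\<^sup>2 * Lam_curv 0 dy"
      using Lam_add_scaleR[of cfg dy uu t 0] Lam_slope_single_block[OF i] by (simp add: dy_def)
    have Q: "qn T (cfg i + t *\<^sub>R h - c0) = qn T (cfg i - c0) + t * (2 * (T (cfg i - c0) \<bullet> h))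
        + t\<^sup>2 * qn T h"
      using qn_add_scaleR[OF Tth_sa_psd[OF i], of "cfg i - c0" h t] cfgY i c0 h sub
      unfolding T_def by (simp add: subspace_diff algebra_simps)
    have "cfg i + t *\<^sub>R h \<in> Y i"
      using cfgY i h sub by (auto intro!: subspace_add subspace_scale)
    then have "Lam uu cfg + \<sigma>/2 * qn T (cfg i - c0)
        \<le> Lam uu (cfg(i := cfg i + t *\<^sub>R h)) + \<sigma>/2 * qn T (cfg i + t *\<^sub>R h - c0)"
      using opt unfolding T_def by blast
    then show "0 \<le> t * G h + t\<^sup>2 * (Lam_curv 0 dy + \<sigma>/2 * qn T h)"
      unfolding L Q G_def by (simp add: algebra_simps)
  qed
  have "G (-h) = - G h"
    unfolding G_def by (simp add: linear_neg[OF linear_adjoint_A[OF i]])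
  then show ?thesis
    using G_nonneg[OF h] G_nonneg[of "-h"] h sub by (simp add: subspace_neg G_def T_def)
qed


lemma u_variational_ineq:
  assumes w: "w \<in> domf"
  shows "0 \<le> f w - f u1 + shifted_mult u1 yb \<bullet> adjoint F (w - u1) + \<sigma> * (Tf (u1 - u0) \<bullet> (w - u1))"
proof (rule nonneg_slope_of_nonneg_quadratic)
  fix t :: real assume t0: "0 < t" and t1: "t \<le> 1"
  define d where "d = w - u1"
  have wt_eq: "u1 + t *\<^sub>R d = (1 - t) *\<^sub>R u1 + t *\<^sub>R w" by (simp add: d_def algebra_simps)
  have wt: "u1 + t *\<^sub>R d \<in> domf"
    unfolding wt_eq using domconv u1_in w t0 t1 by (simp add: convex_def)
  have f_le: "f (u1 + t *\<^sub>R d) - f u1 \<le> t * (f w - f u1)"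
    unfolding wt_eq using convex_onD[OF fconv, of t u1 w] t0 t1 u1_in w by (simp add: algebra_simps)
  have "\<forall>i\<in>{1..p}. yb i \<in> Y i \<and> (0::'y) \<in> Y i" using ybar_in Ysub by (auto simp: subspace_0)
  then have L: "Lam (u1 + t *\<^sub>R d) yb
      = Lam u1 yb + (f (u1 + t *\<^sub>R d) - f u1) + t * (shifted_mult u1 yb \<bullet> adjoint F d)
        + t\<^sup>2 * Lam_curv d (\<lambda>i. 0)"
    using Lam_add_scaleR[of yb "\<lambda>i. 0" u1 t d]
    by (simp add: Lam_slope_def res_dir_def linear_0[OF linear_adjoint_A])
  have Q: "qn Tf (u1 + t *\<^sub>R d - u0) = qn Tf (u1 - u0) + t * (2 * (Tf (u1 - u0) \<bullet> d)) + t\<^sup>2 * qn Tf d"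
    using qn_add_scaleR[OF Tfpsd, of "u1 - u0" d t] by (simp add: algebra_simps)
  have "Lam u1 yb + \<sigma>/2 * qn Tf (u1 - u0) \<le> Lam (u1 + t *\<^sub>R d) yb + \<sigma>/2 * qn Tf (u1 + t *\<^sub>R d - u0)"
    using step_u wt by blast
  then show "0 \<le> t * (f w - f u1 + shifted_mult u1 yb \<bullet> adjoint F (w - u1) + \<sigma> * (Tf (u1 - u0) \<bullet> (w - u1)))
      + t\<^sup>2 * (Lam_curv d (\<lambda>i. 0) + \<sigma>/2 * qn Tf d)"
    using f_le unfolding L Q d_def[symmetric] by (simp add: algebra_simps)
qed

lemma blk_stationarity:
  assumes l: "l \<in> {1..p}" and yY: "\<forall>i\<in>{1..p}. y i \<in> Y i" and aY: "a \<in> Y l" and h: "h \<in> Y l"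
    and opt: "\<forall>w\<in>Y l. Lam uu (blk y l a yb) + \<sigma>/2 * qn (Tth \<sigma> E P A l) (a - y0 l)
         \<le> Lam uu (blk y l w yb) + \<sigma>/2 * qn (Tth \<sigma> E P A l) (w - y0 l)"
  shows "(P l a - b l) \<bullet> h + shifted_mult uu (blk y l a yb) \<bullet> adjoint (A l) h
      + \<sigma> * (Tth \<sigma> E P A l (a - y0 l) \<bullet> h) = 0"
  using block_stationarity[OF l blk_in[OF l yY aY] y0Y[OF l] _ h] opt
  unfolding blk_at blk_update[of y l _ yb a, symmetric] by blast

lemma backward_stationarity:
  "l \<in> {1..p} \<Longrightarrow> h \<in> Y l \<Longrightarrow> (P l (yb l) - b l) \<bullet> h + shifted_mult u0 (blk y0 l (yb l) yb) \<bullet> adjoint (A l) h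
      + \<sigma> * (Tth \<sigma> E P A l (yb l - y0 l) \<bullet> h) = 0"
  by (rule blk_stationarity) (use y0Y ybar_in step_ybar in auto)

lemma forward_stationarity:
  "l \<in> {1..p} \<Longrightarrow> h \<in> Y l \<Longrightarrow> (P l (y1 l) - b l) \<bullet> h + shifted_mult u1 (blk y1 l (y1 l) yb) \<bullet> adjoint (A l) h
      + \<sigma> * (Tth \<sigma> E P A l (y1 l - y0 l) \<bullet> h) = 0"
  by (rule blk_stationarity) (use y1_in step_y in auto)

lemma res_blk_diff:
  assumes l: "l \<in> {1..p}"
  shows "res u (blk y l a yb) - res u' (blk y' l a' yb)
    = adjoint F (u - u') + (\<Sum>j\<in>{1..<l}. adjoint (A j) (y j - y' j)) + adjoint (A l) (a - a')"
proof -
  have "(\<Sum>j\<in>{1..p}. adjoint (A j) (blk y l a yb j)) - (\<Sum>j\<in>{1..p}. adjoint (A j) (blk y' l a' yb j))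
     = (\<Sum>j\<in>{1..p}. (if j < l then adjoint (A j) (y j - y' j) else 0)
        + (if j = l then adjoint (A l) (a - a') else 0))"
    unfolding sum_subtractf[symmetric]
    by (rule sum.cong) (auto simp: blk_def linear_diff[OF linear_adjoint_A])
  also have "\<dots> = (\<Sum>j\<in>{1..<l}. adjoint (A j) (y j - y' j)) + adjoint (A l) (a - a')"
    using l sum_if_less_eq_sum_atLeastLessThan[of l p "\<lambda>j. adjoint (A j) (y j - y' j)"]
    by (simp add: sum.distrib)
  finally show ?thesis
    unfolding res_def by (simp add: linear_diff[OF linear_adjoint_F] algebra_simps)
qed

text \<open>Subtracting the stationarity conditions of
  the backward and the forward sweep at block \<open>l\<close>, the terms in \<open>P\<^sub>l\<close>, \<open>T\<^sub>\<theta>\<^sub>l\<close> and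
  \<open>A\<^sub>l A\<^sub>l\<^sup>*\<close> recombine into \<open>E\<^sub>l\<close>.\<close>
lemma sweep_gap:
  assumes l: "l \<in> {1..p}"
  shows "E l (yb l - y1 l) = A l (adjoint F (u1 - u0) + (\<Sum>j\<in>{1..<l}. adjoint (A j) (y1 j - y0 j)))"
proof -
  define \<Delta> where "\<Delta> = yb l - y1 l"
  define W where "W = adjoint F (u1 - u0) + (\<Sum>j\<in>{1..<l}. adjoint (A j) (y1 j - y0 j))"
  define T where "T = Tth \<sigma> E P A l"
  interpret E: pd_on_subspace "Y l" "E l" using E_pd[OF l] .
  have lP: "linear (P l)" using Ppsd[OF l] unfolding sa_psd_on_def by auto
  have lT: "linear T" using Tth_sa_psd[OF l] unfolding sa_psd_on_def T_def by auto
  have lA: "linear (A l)" using linA[OF l] .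
  have \<Delta>Y: "\<Delta> \<in> Y l" unfolding \<Delta>_def using ybar_in[OF l] y1_in[OF l] E.subspace by (simp add: subspace_diff)
  have mult_diff: "shifted_mult u0 (blk y0 l (yb l) yb) - shifted_mult u1 (blk y1 l (y1 l) yb)
      = \<sigma> *\<^sub>R (adjoint (A l) \<Delta> - W)"
  proof -
    have "(\<Sum>j\<in>{1..<l}. adjoint (A j) (y0 j - y1 j)) = - (\<Sum>j\<in>{1..<l}. adjoint (A j) (y1 j - y0 j))"
      unfolding sum_negf[symmetric]
      by (rule sum.cong) (use l in \<open>auto simp: linear_diff[OF linear_adjoint_A]\<close>)
    moreover have "shifted_mult u0 (blk y0 l (yb l) yb) - shifted_mult u1 (blk y1 l (y1 l) yb)
        = \<sigma> *\<^sub>R (res u0 (blk y0 l (yb l) yb) - res u1 (blk y1 l (y1 l) yb))"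
      by (simp add: shifted_mult_def scaleR_diff_right)
    ultimately show ?thesis
      unfolding res_blk_diff[OF l] W_def \<Delta>_def
      by (simp add: linear_diff[OF linear_adjoint_F] algebra_simps)
  qed
  have orth: "(E l \<Delta> - A l W) \<bullet> h = 0" if h: "h \<in> Y l" for h
  proof -
    have "shifted_mult u0 (blk y0 l (yb l) yb) \<bullet> adjoint (A l) h - shifted_mult u1 (blk y1 l (y1 l) yb) \<bullet> adjoint (A l) h
        = \<sigma> * (A l (adjoint (A l) \<Delta>) \<bullet> h) - \<sigma> * (A l W \<bullet> h)"
      unfolding inner_diff_left[symmetric] mult_diff
      by (simp add: adjoint_works[OF lA] linear_diff[OF lA] linear_scale[OF lA] inner_diff_left algebra_simps)
    moreover have "\<sigma> * (T (yb l - y0 l) \<bullet> h) - \<sigma> * (T (y1 l - y0 l) \<bullet> h) = \<sigma> * (T \<Delta> \<bullet> h)"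
      unfolding right_diff_distrib[symmetric] inner_diff_left[symmetric] linear_diff[OF lT, symmetric] \<Delta>_def
      by simp
    moreover have "\<sigma> * (T \<Delta> \<bullet> h) = \<sigma> * (E l \<Delta> \<bullet> h) - P l \<Delta> \<bullet> h - \<sigma> * (A l (adjoint (A l) \<Delta>) \<bullet> h)"
      using sig unfolding T_def Tth_def by (simp add: inner_diff_left algebra_simps)
    moreover have "P l (yb l) \<bullet> h - P l (y1 l) \<bullet> h = P l \<Delta> \<bullet> h"
      unfolding \<Delta>_def by (simp add: linear_diff[OF lP] inner_diff_left)
    ultimately have "\<sigma> * (E l \<Delta> \<bullet> h) - \<sigma> * (A l W \<bullet> h) = 0"
      using backward_stationarity[OF l h] forward_stationarity[OF l h]
      unfolding T_def[symmetric] inner_diff_left by linarith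
    then show ?thesis using sig by (simp add: inner_diff_left)
  qed
  have "E l \<Delta> - A l W \<in> Y l" using E.maps_to[OF \<Delta>Y] AY[OF l] E.subspace by (simp add: subspace_diff)
  then have "E l \<Delta> - A l W = 0" using orth inner_eq_zero_iff by blast
  then show ?thesis unfolding \<Delta>_def W_def by simp
qed


definition corr where
  "corr l uw = adjoint (A l) (inv_into (Y l) (E l) (A l (Fi_adj F A l uw)))"

lemma corr_restrict:
  "l \<le> Suc m \<Longrightarrow> corr l (fst uw, \<lambda>j. if j < Suc m then snd uw j else 0) = corr l uw"
  unfolding corr_def Fi_adj_def by (auto intro!: sum.cong arg_cong[where f = "\<lambda>v. adjoint (A l) (inv_into (Y l) (E l) (A l v))"])

lemma hatT_Suc:
  "hatT \<sigma> Tf F A P E Y (Suc m) uw = (Tf (fst uw) + (\<Sum>l\<in>{1..Suc m}. F (corr l uw)),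
     \<lambda>j. if 1 \<le> j \<and> j < Suc m then Tth \<sigma> E P A j (snd uw j) + (\<Sum>l\<in>{j<..Suc m}. A j (corr l uw)) else 0)"
proof (induction m arbitrary: uw)
  case 0
  show ?case by (auto simp: padd_def sgscorr_def Fi_def corr_def fun_eq_iff)
next
  case (Suc m)
  define uw' where "uw' = (fst uw, \<lambda>j. if j < Suc m then snd uw j else 0)"
  have sum_Suc: "j \<le> Suc m \<Longrightarrow> (\<Sum>l\<in>{j<..Suc (Suc m)}. A j (corr l uw))
      = (\<Sum>l\<in>{j<..Suc m}. A j (corr l uw)) + A j (corr (Suc (Suc m)) uw)" for j
    by (simp add: atLeastSucAtMost_greaterThanAtMost[symmetric])
  have H: "hatT \<sigma> Tf F A P E Y (Suc (Suc m)) uw = padd (fst (hatT \<sigma> Tf F A P E Y (Suc m) uw'),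
      (snd (hatT \<sigma> Tf F A P E Y (Suc m) uw'))(Suc m := Tth \<sigma> E P A (Suc m) (snd uw (Suc m))))
      (Fi F A (Suc (Suc m)) (corr (Suc (Suc m)) uw))"
    by (simp add: uw'_def Let_def sgscorr_def corr_def)
  show ?case
    unfolding H Suc.IH
    by (auto simp: padd_def Fi_def fun_eq_iff uw'_def corr_restrict sum_Suc sum.cl_ivl_Suc
        intro!: sum.cong)
qed


definition AF where
  "AF l \<delta> = A l (Fi_adj F A l \<delta>)"

text \<open>The quadratic form of \<open>hatT\<close> unrolled: the block diagonal part plus one term
  \<open>\<langle>A\<^sub>l F\<^sub>l\<^sup>* \<delta>, E\<^sub>l\<^sup>-\<^sup>1 A\<^sub>l F\<^sub>l\<^sup>* \<delta>\<rangle>\<close> per block.\<close>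
definition sgs_quad where
  "sgs_quad \<delta> = fst \<delta> \<bullet> Tf (fst \<delta>) + (\<Sum>j\<in>{1..<p}. snd \<delta> j \<bullet> Tth \<sigma> E P A j (snd \<delta> j))
    + (\<Sum>l\<in>{1..p}. AF l \<delta> \<bullet> inv_into (Y l) (E l) (AF l \<delta>))"

lemma AF_inner_inv:
  assumes l: "l \<in> {1..p}"
  shows "AF l \<delta> \<bullet> inv_into (Y l) (E l) (AF l \<delta>)
    = fst \<delta> \<bullet> F (corr l \<delta>) + (\<Sum>j\<in>{1..<l}. snd \<delta> j \<bullet> A j (corr l \<delta>))"
proof -
  have "AF l \<delta> \<bullet> inv_into (Y l) (E l) (AF l \<delta>) = Fi_adj F A l \<delta> \<bullet> corr l \<delta>"
    unfolding AF_def corr_def by (simp add: adjoint_works[OF linA[OF l]])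
  moreover have "(\<Sum>j\<in>{1..<l}. adjoint (A j) (snd \<delta> j)) \<bullet> corr l \<delta>
      = (\<Sum>j\<in>{1..<l}. snd \<delta> j \<bullet> A j (corr l \<delta>))"
    unfolding inner_sum_left
    by (rule sum.cong) (use l in \<open>auto simp: adjoint_clauses(2)[OF linA]\<close>)
  ultimately show ?thesis
    unfolding Fi_adj_def by (simp add: inner_add_left adjoint_clauses(2)[OF linF])
qed

lemma hatqf_eq_sgs_quad: "hatqf \<sigma> Tf F A P E Y p \<delta> = sgs_quad \<delta>"
proof -
  obtain m where pm: "p = Suc m" using p1 by (cases p) auto
  have hatqf: "hatqf \<sigma> Tf F A P E Y p \<delta> = fst \<delta> \<bullet> (Tf (fst \<delta>) + (\<Sum>l\<in>{1..p}. F (corr l \<delta>)))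
      + (\<Sum>j\<in>{1..<p}. snd \<delta> j \<bullet> (Tth \<sigma> E P A j (snd \<delta> j) + (\<Sum>l\<in>{j<..p}. A j (corr l \<delta>))))"
    unfolding hatqf_def Let_def pm hatT_Suc by (auto intro!: sum.cong)
  have "(\<Sum>l\<in>{1..p}. AF l \<delta> \<bullet> inv_into (Y l) (E l) (AF l \<delta>))
      = (\<Sum>l\<in>{1..p}. fst \<delta> \<bullet> F (corr l \<delta>) + (\<Sum>j\<in>{1..<l}. snd \<delta> j \<bullet> A j (corr l \<delta>)))"
    by (rule sum.cong) (simp_all add: AF_inner_inv)
  also have "\<dots> = (\<Sum>l\<in>{1..p}. fst \<delta> \<bullet> F (corr l \<delta>)) + (\<Sum>j\<in>{1..<p}. \<Sum>l\<in>{j<..p}. snd \<delta> j \<bullet> A j (corr l \<delta>))"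
    unfolding sum.distrib sum_triangle_swap ..
  finally show ?thesis
    unfolding hatqf sgs_quad_def by (simp add: inner_add_right inner_sum_right sum.distrib)
qed

lemma AF_add:
  assumes l: "l \<in> {1..p}"
  shows "AF l (a1 + a2, \<lambda>j. c1 j + c2 j) = AF l (a1, c1) + AF l (a2, c2)"
proof -
  have "(\<Sum>j\<in>{1..<l}. adjoint (A j) (c1 j + c2 j))
      = (\<Sum>j\<in>{1..<l}. adjoint (A j) (c1 j)) + (\<Sum>j\<in>{1..<l}. adjoint (A j) (c2 j))"
    unfolding sum.distrib[symmetric]
    by (rule sum.cong) (use l in \<open>auto simp: linear_add[OF linear_adjoint_A]\<close>)
  then show ?thesis
    unfolding AF_def Fi_adj_def
    by (simp add: linear_add[OF linear_adjoint_F] linear_add[OF linA[OF l]] algebra_simps)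
qed

definition sgs_quad_slope where
  "sgs_quad_slope d e = Tf (u1 - u0) \<bullet> d + (\<Sum>j\<in>{1..<p}. Tth \<sigma> E P A j (y1 j - y0 j) \<bullet> e j)
    + (\<Sum>l\<in>{1..p}. (yb l - y1 l) \<bullet> AF l (d, e))"

text \<open>Convexity of \<open>sgs_quad\<close> at \<open>(u1 - u0, y1 - y0)\<close>; by \<open>sweep_gap\<close> the gradient of the
  \<open>E\<^sub>l\<^sup>-\<^sup>1\<close>-terms there is the gap \<open>yb - y1\<close> between the two sweeps.\<close>
lemma sgs_quad_ge:
  assumes y'Y: "\<forall>i\<in>{1..p}. y' i \<in> Y i"
  shows "sgs_quad (u1 - u0, \<lambda>i. y1 i - y0 i) + 2 * sgs_quad_slope (w - u1) (\<lambda>i. y' i - y1 i)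
    \<le> sgs_quad (w - u0, \<lambda>i. y' i - y0 i)"
proof -
  define d where "d = w - u1"
  define e where "e i = y' i - y1 i" for i
  have eY: "i \<in> {1..p} \<Longrightarrow> e i \<in> Y i" for i using y'Y y1_in Ysub by (auto simp: e_def subspace_diff)
  have dY: "i \<in> {1..p} \<Longrightarrow> y1 i - y0 i \<in> Y i" for i using y0Y y1_in Ysub by (auto simp: subspace_diff)
  have Tf_ge: "qn Tf (u1 - u0) + 2 * (Tf (u1 - u0) \<bullet> d) \<le> qn Tf (w - u0)"
    using qn_add_ge[OF Tfpsd, of "u1 - u0" d] by (simp add: d_def)
  have Tth_ge: "qn (Tth \<sigma> E P A j) (y1 j - y0 j) + 2 * (Tth \<sigma> E P A j (y1 j - y0 j) \<bullet> e j)
      \<le> qn (Tth \<sigma> E P A j) (y' j - y0 j)" if j: "j \<in> {1..p}" for j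
    using qn_add_ge[OF Tth_sa_psd[OF j] dY[OF j] eY[OF j]] by (simp add: e_def)
  have inv_ge: "AF l (u1 - u0, \<lambda>i. y1 i - y0 i) \<bullet> inv_into (Y l) (E l) (AF l (u1 - u0, \<lambda>i. y1 i - y0 i))
      + 2 * ((yb l - y1 l) \<bullet> AF l (d, e))
      \<le> AF l (w - u0, \<lambda>i. y' i - y0 i) \<bullet> inv_into (Y l) (E l) (AF l (w - u0, \<lambda>i. y' i - y0 i))"
    if l: "l \<in> {1..p}" for l
  proof -
    interpret E: pd_on_subspace "Y l" "E l" using E_pd[OF l] .
    define m1 where "m1 = AF l (u1 - u0, \<lambda>i. y1 i - y0 i)"
    define m2 where "m2 = AF l (d, e)"
    have "AF l (w - u0, \<lambda>i. y' i - y0 i) = AF l ((u1 - u0) + d, \<lambda>i. (y1 i - y0 i) + e i)"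
      by (simp add: d_def e_def)
    then have sum_eq: "AF l (w - u0, \<lambda>i. y' i - y0 i) = m1 + m2"
      unfolding m1_def m2_def AF_add[OF l] by simp
    have "E l (yb l - y1 l) = m1"
      unfolding m1_def AF_def Fi_adj_def using sweep_gap[OF l] by simp
    then have "inv_into (Y l) (E l) m1 = yb l - y1 l"
      using E.inv_into_f ybar_in[OF l] y1_in[OF l] E.subspace by (metis subspace_diff)
    moreover have "m1 \<in> Y l" "m2 \<in> Y l" using AY[OF l] by (simp_all add: m1_def m2_def AF_def)
    ultimately show ?thesis
      using E.inv_into_quadratic_ge[of m1 m2]
      unfolding sum_eq m1_def[symmetric] m2_def[symmetric] by simp
  qed
  have "(\<Sum>j\<in>{1..<p}. qn (Tth \<sigma> E P A j) (y1 j - y0 j)) + 2 * (\<Sum>j\<in>{1..<p}. Tth \<sigma> E P A j (y1 j - y0 j) \<bullet> e j)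
      \<le> (\<Sum>j\<in>{1..<p}. qn (Tth \<sigma> E P A j) (y' j - y0 j))"
    unfolding sum_distrib_left sum.distrib[symmetric] by (rule sum_mono) (use Tth_ge in auto)
  moreover have "(\<Sum>l\<in>{1..p}. AF l (u1 - u0, \<lambda>i. y1 i - y0 i) \<bullet> inv_into (Y l) (E l) (AF l (u1 - u0, \<lambda>i. y1 i - y0 i)))
      + 2 * (\<Sum>l\<in>{1..p}. (yb l - y1 l) \<bullet> AF l (d, e))
      \<le> (\<Sum>l\<in>{1..p}. AF l (w - u0, \<lambda>i. y' i - y0 i) \<bullet> inv_into (Y l) (E l) (AF l (w - u0, \<lambda>i. y' i - y0 i)))"
    unfolding sum_distrib_left sum.distrib[symmetric] by (rule sum_mono) (use inv_ge in auto)
  ultimately show ?thesis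
    using Tf_ge unfolding sgs_quad_def sgs_quad_slope_def qn_def d_def[symmetric] e_def[symmetric]
    by (simp add: algebra_simps)
qed

definition sweep_corr where
  "sweep_corr l = adjoint (A l) (yb l - y1 l)"

lemma shifted_mult_ybar: "shifted_mult u1 yb = shifted_mult u1 y1 + \<sigma> *\<^sub>R (\<Sum>l\<in>{1..p}. sweep_corr l)"
proof -
  have "(\<Sum>i\<in>{1..p}. adjoint (A i) (yb i)) = (\<Sum>i\<in>{1..p}. adjoint (A i) (y1 i) + sweep_corr i)"
    by (rule sum.cong) (auto simp: sweep_corr_def linear_diff[OF linear_adjoint_A])
  then show ?thesis
    unfolding shifted_mult_def res_def by (simp add: sum.distrib algebra_simps)
qed

lemma shifted_mult_blk:
  assumes j: "j \<in> {1..p}"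
  shows "shifted_mult u1 (blk y1 j (y1 j) yb) = shifted_mult u1 y1 + \<sigma> *\<^sub>R (\<Sum>l\<in>{j<..p}. sweep_corr l)"
proof -
  have "(\<Sum>i\<in>{1..p}. adjoint (A i) (blk y1 j (y1 j) yb i))
      = (\<Sum>i\<in>{1..p}. adjoint (A i) (y1 i) + (if j < i then sweep_corr i else 0))"
    by (rule sum.cong) (auto simp: sweep_corr_def blk_def linear_diff[OF linear_adjoint_A])
  moreover have "(\<Sum>i\<in>{1..p}. if j < i then sweep_corr i else 0) = (\<Sum>l\<in>{j<..p}. sweep_corr l)"
    by (subst sum.inter_filter[symmetric]) (use j in \<open>auto intro: sum.cong\<close>)
  ultimately show ?thesis
    unfolding shifted_mult_def res_def by (simp add: sum.distrib algebra_simps)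
qed

lemma sweep_gap_inner_AF:
  "(\<Sum>l\<in>{1..p}. (yb l - y1 l) \<bullet> AF l (d, e))
    = (\<Sum>l\<in>{1..p}. sweep_corr l \<bullet> adjoint F d) + (\<Sum>j\<in>{1..p}. \<Sum>l\<in>{j<..p}. sweep_corr l \<bullet> adjoint (A j) (e j))"
proof -
  have "(\<Sum>l\<in>{1..p}. (yb l - y1 l) \<bullet> AF l (d, e))
      = (\<Sum>l\<in>{1..p}. sweep_corr l \<bullet> adjoint F d + (\<Sum>j\<in>{1..<l}. sweep_corr l \<bullet> adjoint (A j) (e j)))"
  proof (rule sum.cong)
    fix l assume l: "l \<in> {1..p}"
    have "(yb l - y1 l) \<bullet> AF l (d, e) = sweep_corr l \<bullet> (adjoint F d + (\<Sum>j\<in>{1..<l}. adjoint (A j) (e j)))"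
      unfolding AF_def Fi_adj_def sweep_corr_def
      by (simp only: adjoint_clauses(2)[OF linA[OF l]] fst_conv snd_conv)
    then show "(yb l - y1 l) \<bullet> AF l (d, e)
        = sweep_corr l \<bullet> adjoint F d + (\<Sum>j\<in>{1..<l}. sweep_corr l \<bullet> adjoint (A j) (e j))"
      by (simp add: inner_add_right inner_sum_right)
  qed simp
  also have "\<dots> = (\<Sum>l\<in>{1..p}. sweep_corr l \<bullet> adjoint F d)
      + (\<Sum>j\<in>{1..<p}. \<Sum>l\<in>{j<..p}. sweep_corr l \<bullet> adjoint (A j) (e j))"
    unfolding sum.distrib sum_triangle_swap ..
  also have "(\<Sum>j\<in>{1..<p}. \<Sum>l\<in>{j<..p}. sweep_corr l \<bullet> adjoint (A j) (e j))
      = (\<Sum>j\<in>{1..p}. \<Sum>l\<in>{j<..p}. sweep_corr l \<bullet> adjoint (A j) (e j))"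
    by (rule sum.mono_neutral_left) auto
  finally show ?thesis .
qed

text \<open>The first-order terms of the joint problem are the \<open>u\<close>-inequality plus the forward
  stationarity conditions tested with \<open>y' - y1\<close>: the multipliers seen by the forward sweep
  differ from \<open>shifted_mult u1 y1\<close> by the sweep gaps, which produces the cross terms of
  \<open>sgs_quad_slope\<close>.\<close>
lemma first_order_terms_nonneg:
  assumes w: "w \<in> domf" and y'Y: "\<forall>i\<in>{1..p}. y' i \<in> Y i"
  shows "0 \<le> f w - f u1 + Lam_slope u1 y1 (w - u1) (\<lambda>i. y' i - y1 i)
    + \<sigma> * sgs_quad_slope (w - u1) (\<lambda>i. y' i - y1 i) + \<sigma> * (Tth \<sigma> E P A p (y1 p - y0 p) \<bullet> (y' p - y1 p))"
proof -
  define d where "d = w - u1"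
  define e where "e i = y' i - y1 i" for i
  define m where "m = shifted_mult u1 y1"
  define T where "T j = Tth \<sigma> E P A j (y1 j - y0 j) \<bullet> e j" for j
  have eY: "i \<in> {1..p} \<Longrightarrow> e i \<in> Y i" for i using y'Y y1_in Ysub by (auto simp: e_def subspace_diff)
  have "(\<Sum>j\<in>{1..p}. (P j (y1 j) - b j) \<bullet> e j + m \<bullet> adjoint (A j) (e j)
      + \<sigma> * (\<Sum>l\<in>{j<..p}. sweep_corr l \<bullet> adjoint (A j) (e j)) + \<sigma> * T j) = 0"
  proof (rule sum.neutral, intro ballI)
    fix j assume j: "j \<in> {1..p}"
    show "(P j (y1 j) - b j) \<bullet> e j + m \<bullet> adjoint (A j) (e j)
      + \<sigma> * (\<Sum>l\<in>{j<..p}. sweep_corr l \<bullet> adjoint (A j) (e j)) + \<sigma> * T j = 0"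
      using forward_stationarity[OF j eY[OF j]]
      unfolding shifted_mult_blk[OF j] m_def T_def by (simp add: inner_add_left inner_sum_left)
  qed
  then have "(\<Sum>j\<in>{1..p}. (P j (y1 j) - b j) \<bullet> e j) + (\<Sum>j\<in>{1..p}. m \<bullet> adjoint (A j) (e j))
      + \<sigma> * (\<Sum>j\<in>{1..p}. \<Sum>l\<in>{j<..p}. sweep_corr l \<bullet> adjoint (A j) (e j)) + \<sigma> * (\<Sum>j\<in>{1..p}. T j) = 0"
    by (simp add: sum.distrib sum_distrib_left)
  moreover have "{1..p} = insert p {1..<p}" using p1 by auto
  then have "(\<Sum>j\<in>{1..p}. T j) = (\<Sum>j\<in>{1..<p}. T j) + T p" by simp
  moreover have "0 \<le> f w - f u1 + m \<bullet> adjoint F d + \<sigma> * (\<Sum>l\<in>{1..p}. sweep_corr l \<bullet> adjoint F d)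
      + \<sigma> * (Tf (u1 - u0) \<bullet> d)"
    using u_variational_ineq[OF w]
    unfolding shifted_mult_ybar m_def d_def by (simp add: inner_add_left inner_sum_left algebra_simps)
  moreover have "Lam_slope u1 y1 d e = (\<Sum>i\<in>{1..p}. (P i (y1 i) - b i) \<bullet> e i) + m \<bullet> adjoint F d
      + (\<Sum>i\<in>{1..p}. m \<bullet> adjoint (A i) (e i))"
    unfolding Lam_slope_def res_dir_def m_def by (simp add: inner_add_right inner_sum_right)
  ultimately show ?thesis
    unfolding sgs_quad_slope_def sweep_gap_inner_AF d_def[symmetric] e_def[symmetric] T_def[symmetric]
    by (simp add: algebra_simps)
qed

lemma joint_prox_ineq:
  assumes w: "w \<in> domf" and y'Y: "\<forall>i\<in>{1..p}. y' i \<in> Y i"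
  shows "Lam u1 y1 + \<sigma>/2 * hatqf \<sigma> Tf F A P E Y p (u1 - u0, \<lambda>i. y1 i - y0 i)
      + \<sigma>/2 * qn (Tth \<sigma> E P A p) (y1 p - y0 p)
    \<le> Lam w y' + \<sigma>/2 * hatqf \<sigma> Tf F A P E Y p (w - u0, \<lambda>i. y' i - y0 i)
      + \<sigma>/2 * qn (Tth \<sigma> E P A p) (y' p - y0 p)"
proof -
  define d where "d = w - u1"
  define e where "e i = y' i - y1 i" for i
  have pp: "p \<in> {1..p}" using p1 by auto
  have eY: "i \<in> {1..p} \<Longrightarrow> e i \<in> Y i" for i using y'Y y1_in Ysub by (auto simp: e_def subspace_diff)
  have "\<forall>i\<in>{1..p}. y1 i \<in> Y i \<and> e i \<in> Y i" using y1_in eY by auto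
  then have Lam_w: "Lam w y' = Lam u1 y1 + (f w - f u1) + Lam_slope u1 y1 d e + Lam_curv d e"
    using Lam_add_scaleR[of y1 e u1 1 d] by (simp add: d_def e_def)
  have "0 \<le> Lam_curv d e"
    using eY Ppsd sig unfolding Lam_curv_def sa_psd_on_def by (auto intro!: add_nonneg_nonneg sum_nonneg)
  moreover have "\<sigma>/2 * (sgs_quad (u1 - u0, \<lambda>i. y1 i - y0 i) + 2 * sgs_quad_slope d e)
      \<le> \<sigma>/2 * sgs_quad (w - u0, \<lambda>i. y' i - y0 i)"
    using sgs_quad_ge[OF y'Y, of w] sig unfolding d_def e_def by (simp add: mult_left_mono)
  moreover have "\<sigma>/2 * (qn (Tth \<sigma> E P A p) (y1 p - y0 p) + 2 * (Tth \<sigma> E P A p (y1 p - y0 p) \<bullet> e p))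
      \<le> \<sigma>/2 * qn (Tth \<sigma> E P A p) (y' p - y0 p)"
    using qn_add_ge[OF Tth_sa_psd[OF pp], of "y1 p - y0 p" "e p"] y0Y[OF pp] y1_in[OF pp] eY[OF pp] Ysub[OF pp] sig
    by (simp add: e_def subspace_diff mult_left_mono)
  ultimately show ?thesis
    using first_order_terms_nonneg[OF w y'Y]
    unfolding hatqf_eq_sgs_quad Lam_w d_def[symmetric] e_def[symmetric] by (simp add: algebra_simps)
qed

end

lemma Lagr_split_uy:
  "Lagr \<sigma> f g F G A B c P b Q d p q u y v z x =
     f u + (\<Sum>i\<in>{1..p}. quadlin (P i) (b i) (y i)) + (g v + (\<Sum>j\<in>{1..q}. quadlin (Q j) (d j) (z j)))
     + x \<bullet> (adjoint F u + (\<Sum>i\<in>{1..p}. adjoint (A i) (y i))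
              + (adjoint G v + (\<Sum>j\<in>{1..q}. adjoint (B j) (z j)) - c))
     + \<sigma> / 2 * (norm (adjoint F u + (\<Sum>i\<in>{1..p}. adjoint (A i) (y i))
              + (adjoint G v + (\<Sum>j\<in>{1..q}. adjoint (B j) (z j)) - c)))\<^sup>2"
  unfolding Lagr_def Gam_def by (simp add: algebra_simps)

lemma Lagr_split_vz:
  "Lagr \<sigma> f g F G A B c P b Q d p q u y v z x =
     g v + (\<Sum>j\<in>{1..q}. quadlin (Q j) (d j) (z j)) + (f u + (\<Sum>i\<in>{1..p}. quadlin (P i) (b i) (y i)))
     + x \<bullet> (adjoint G v + (\<Sum>j\<in>{1..q}. adjoint (B j) (z j))
              + (adjoint F u + (\<Sum>i\<in>{1..p}. adjoint (A i) (y i)) - c))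
     + \<sigma> / 2 * (norm (adjoint G v + (\<Sum>j\<in>{1..q}. adjoint (B j) (z j))
              + (adjoint F u + (\<Sum>i\<in>{1..p}. adjoint (A i) (y i)) - c)))\<^sup>2"
  unfolding Lagr_def Gam_def by (simp add: algebra_simps)

theorem proposition3p2:
  fixes f :: "'u::euclidean_space \<Rightarrow> real" and domf :: "'u set"
    and g :: "'v::euclidean_space \<Rightarrow> real" and domg :: "'v set"
    and F :: "'x::euclidean_space \<Rightarrow> 'u" and G :: "'x \<Rightarrow> 'v"
    and A :: "nat \<Rightarrow> 'x \<Rightarrow> 'y::euclidean_space" and Y :: "nat \<Rightarrow> 'y set"
    and B :: "nat \<Rightarrow> 'x \<Rightarrow> 'z::euclidean_space" and Z :: "nat \<Rightarrow> 'z set"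
    and c :: 'x
    and P E :: "nat \<Rightarrow> 'y \<Rightarrow> 'y" and b :: "nat \<Rightarrow> 'y"
    and Q H :: "nat \<Rightarrow> 'z \<Rightarrow> 'z" and d :: "nat \<Rightarrow> 'z"
    and Tf :: "'u \<Rightarrow> 'u" and Tg :: "'v \<Rightarrow> 'v"
    and p q :: nat and \<sigma> \<tau> :: real
    and u :: "nat \<Rightarrow> 'u" and y ybar :: "nat \<Rightarrow> nat \<Rightarrow> 'y"
    and v :: "nat \<Rightarrow> 'v" and z zbar :: "nat \<Rightarrow> nat \<Rightarrow> 'z" and x :: "nat \<Rightarrow> 'x"
  defines "L \<equiv> Lagr \<sigma> f g F G A B c P b Q d p q"
  assumes pq: "p \<ge> 1" "q \<ge> 1" and sig: "\<sigma> > 0" and tau: "\<tau> > 0"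
    and fconv: "closed_proper_convex f domf" and gconv: "closed_proper_convex g domg"
    and linF: "linear F" and linG: "linear G"
    and Ysub: "\<forall>i\<in>{1..p}. subspace (Y i)" and Zsub: "\<forall>j\<in>{1..q}. subspace (Z j)"
    and linA: "\<forall>i\<in>{1..p}. linear (A i) \<and> (\<forall>w. A i w \<in> Y i)"
    and linB: "\<forall>j\<in>{1..q}. linear (B j) \<and> (\<forall>w. B j w \<in> Z j)"
    and bY: "\<forall>i\<in>{1..p}. b i \<in> Y i" and dZ: "\<forall>j\<in>{1..q}. d j \<in> Z j"
    and Ppsd: "\<forall>i\<in>{1..p}. sa_psd_on (Y i) (P i)"
    and Qpsd: "\<forall>j\<in>{1..q}. sa_psd_on (Z j) (Q j)"
    and Epd: "\<forall>i\<in>{1..p}. sa_psd_on (Y i) (E i) \<and> (\<forall>a\<in>Y i. a \<noteq> 0 \<longrightarrow> 0 < a \<bullet> E i a)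
                 \<and> (\<forall>a\<in>Y i. a \<bullet> ((1/\<sigma>) *\<^sub>R P i a + A i (adjoint (A i) a)) \<le> a \<bullet> E i a)"
    and Hpd: "\<forall>j\<in>{1..q}. sa_psd_on (Z j) (H j) \<and> (\<forall>a\<in>Z j. a \<noteq> 0 \<longrightarrow> 0 < a \<bullet> H j a)
                 \<and> (\<forall>a\<in>Z j. a \<bullet> ((1/\<sigma>) *\<^sub>R Q j a + B j (adjoint (B j) a)) \<le> a \<bullet> H j a)"
    and Tfpsd: "sa_psd_on UNIV Tf" and Tgpsd: "sa_psd_on UNIV Tg"
    and init: "u 0 \<in> domf" "\<forall>i\<in>{1..p}. y 0 i \<in> Y i" "v 0 \<in> domg" "\<forall>j\<in>{1..q}. z 0 j \<in> Z j"
    and step_ybar: "\<forall>k. \<forall>i\<in>{1..p}. ybar k i \<in> Y i \<and> (\<forall>w\<in>Y i.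
         L (u k) (blk (y k) i (ybar k i) (ybar k)) (v k) (z k) (x k)
           + \<sigma>/2 * qn (Tth \<sigma> E P A i) (ybar k i - y k i)
         \<le> L (u k) (blk (y k) i w (ybar k)) (v k) (z k) (x k)
           + \<sigma>/2 * qn (Tth \<sigma> E P A i) (w - y k i))"
    and step_u: "\<forall>k. u (Suc k) \<in> domf \<and> (\<forall>w\<in>domf.
         L (u (Suc k)) (ybar k) (v k) (z k) (x k) + \<sigma>/2 * qn Tf (u (Suc k) - u k)
         \<le> L w (ybar k) (v k) (z k) (x k) + \<sigma>/2 * qn Tf (w - u k))"
    and step_y: "\<forall>k. \<forall>i\<in>{1..p}. y (Suc k) i \<in> Y i \<and> (\<forall>w\<in>Y i.
         L (u (Suc k)) (blk (y (Suc k)) i (y (Suc k) i) (ybar k)) (v k) (z k) (x k)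
           + \<sigma>/2 * qn (Tth \<sigma> E P A i) (y (Suc k) i - y k i)
         \<le> L (u (Suc k)) (blk (y (Suc k)) i w (ybar k)) (v k) (z k) (x k)
           + \<sigma>/2 * qn (Tth \<sigma> E P A i) (w - y k i))"
    and step_zbar: "\<forall>k. \<forall>j\<in>{1..q}. zbar k j \<in> Z j \<and> (\<forall>w\<in>Z j.
         L (u (Suc k)) (y (Suc k)) (v k) (blk (z k) j (zbar k j) (zbar k)) (x k)
           + \<sigma>/2 * qn (Tth \<sigma> H Q B j) (zbar k j - z k j)
         \<le> L (u (Suc k)) (y (Suc k)) (v k) (blk (z k) j w (zbar k)) (x k)
           + \<sigma>/2 * qn (Tth \<sigma> H Q B j) (w - z k j))"
    and step_v: "\<forall>k. v (Suc k) \<in> domg \<and> (\<forall>w\<in>domg.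
         L (u (Suc k)) (y (Suc k)) (v (Suc k)) (zbar k) (x k) + \<sigma>/2 * qn Tg (v (Suc k) - v k)
         \<le> L (u (Suc k)) (y (Suc k)) w (zbar k) (x k) + \<sigma>/2 * qn Tg (w - v k))"
    and step_z: "\<forall>k. \<forall>j\<in>{1..q}. z (Suc k) j \<in> Z j \<and> (\<forall>w\<in>Z j.
         L (u (Suc k)) (y (Suc k)) (v (Suc k)) (blk (z (Suc k)) j (z (Suc k) j) (zbar k)) (x k)
           + \<sigma>/2 * qn (Tth \<sigma> H Q B j) (z (Suc k) j - z k j)
         \<le> L (u (Suc k)) (y (Suc k)) (v (Suc k)) (blk (z (Suc k)) j w (zbar k)) (x k)
           + \<sigma>/2 * qn (Tth \<sigma> H Q B j) (w - z k j))"
    and step_x: "\<forall>k. x (Suc k) = x k + (\<tau> * \<sigma>) *\<^sub>R Gam F G A B c p q (u (Suc k)) (y (Suc k)) (v (Suc k)) (z (Suc k))"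
  shows "\<forall>k.
     (u (Suc k) \<in> domf \<and> (\<forall>i\<in>{1..p}. y (Suc k) i \<in> Y i) \<and>
      (\<forall>w\<in>domf. \<forall>y'. (\<forall>i\<in>{1..p}. y' i \<in> Y i) \<longrightarrow>
         L (u (Suc k)) (y (Suc k)) (v k) (z k) (x k)
           + \<sigma>/2 * hatqf \<sigma> Tf F A P E Y p (u (Suc k) - u k, \<lambda>i. y (Suc k) i - y k i)
           + \<sigma>/2 * qn (Tth \<sigma> E P A p) (y (Suc k) p - y k p)
         \<le> L w y' (v k) (z k) (x k)
           + \<sigma>/2 * hatqf \<sigma> Tf F A P E Y p (w - u k, \<lambda>i. y' i - y k i)
           + \<sigma>/2 * qn (Tth \<sigma> E P A p) (y' p - y k p)))
   \<and> (v (Suc k) \<in> domg \<and> (\<forall>j\<in>{1..q}. z (Suc k) j \<in> Z j) \<and>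
      (\<forall>w\<in>domg. \<forall>z'. (\<forall>j\<in>{1..q}. z' j \<in> Z j) \<longrightarrow>
         L (u (Suc k)) (y (Suc k)) (v (Suc k)) (z (Suc k)) (x k)
           + \<sigma>/2 * hatqf \<sigma> Tg G B Q H Z q (v (Suc k) - v k, \<lambda>j. z (Suc k) j - z k j)
           + \<sigma>/2 * qn (Tth \<sigma> H Q B q) (z (Suc k) q - z k q)
         \<le> L (u (Suc k)) (y (Suc k)) w z' (x k)
           + \<sigma>/2 * hatqf \<sigma> Tg G B Q H Z q (w - v k, \<lambda>j. z' j - z k j)
           + \<sigma>/2 * qn (Tth \<sigma> H Q B q) (z' q - z k q)))
   \<and> x (Suc k) = x k + (\<tau> * \<sigma>) *\<^sub>R Gam F G A B c p q (u (Suc k)) (y (Suc k)) (v (Suc k)) (z (Suc k))"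
proof -
  have fc: "convex domf" "convex_on domf f" and gc: "convex domg" "convex_on domg g"
    using fconv gconv unfolding closed_proper_convex_def by auto
  have yY: "\<forall>i\<in>{1..p}. y k i \<in> Y i" and zZ: "\<forall>j\<in>{1..q}. z k j \<in> Z j" for k
    using init step_y step_z by (cases k; auto)+
  have uy_step: "sgs_step f domf F A Y P E b Tf p \<sigma>
      (adjoint G (v k) + (\<Sum>j\<in>{1..q}. adjoint (B j) (z k j)) - c) (g (v k) + (\<Sum>j\<in>{1..q}. quadlin (Q j) (d j) (z k j)))
      (x k) (\<lambda>u' y'. L u' y' (v k) (z k) (x k)) (u k) (u (Suc k)) (y k) (y (Suc k)) (ybar k)" for k
    unfolding sgs_step_def
    using pq sig fc linF Ysub linA Ppsd Epd Tfpsd yY step_ybar step_u step_y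
    by (intro conjI; (simp only: L_def Lagr_split_uy)?; blast)
  have vz_step: "sgs_step g domg G B Z Q H d Tg q \<sigma>
      (adjoint F (u (Suc k)) + (\<Sum>i\<in>{1..p}. adjoint (A i) (y (Suc k) i)) - c)
      (f (u (Suc k)) + (\<Sum>i\<in>{1..p}. quadlin (P i) (b i) (y (Suc k) i)))
      (x k) (\<lambda>v' z'. L (u (Suc k)) (y (Suc k)) v' z' (x k)) (v k) (v (Suc k)) (z k) (z (Suc k)) (zbar k)" for k
    unfolding sgs_step_def
    using pq sig gc linG Zsub linB Qpsd Hpd Tgpsd zZ step_zbar step_v step_z
    by (intro conjI; (simp only: L_def Lagr_split_vz)?; blast)
  show ?thesis
    using step_u step_y step_v step_z step_x
      sgs_step.joint_prox_ineq[OF uy_step] sgs_step.joint_prox_ineq[OF vz_step]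
    by simp
qed

end
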